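(* Let $\underline{x}\le\overline{x}$, $\underline{y}\le\overline{y}$, $\underline{z}\le\overline{z}$ be real numbers and $\ell,\ell',\ell''\in\mathbb{Z}$. Let $f:[\underline{x};\overline{x}]\to[\underline{y};\overline{y}]$ and $g:[\underline{y};\overline{y}]\to[\underline{z};\overline{z}]$ be functions such that $f$ is pseudo-injective with input LSB $\ell$ and output LSB $\ell'$, and $g$ is pseudo-injective with input LSB $\ell'$ and output LSB $\ell''$. Then $g\circ f:[\underline{x};\overline{x}]\to[\underline{z};\overline{z}]$ is pseudo-injective with input LSB $\ell$ and output LSB $\ell''$.
   Context: For $\ell\in\mathbb{Z}$, write $u=2^\ell$ and, for a real $x$, $\lfloor x\rfloor_\ell = u\cdot\lfloor x/u\rfloor$ (rounding down to the nearest multiple of $2^\ell$). For a function $h:[a;b]\to\mathbb{R}$ and integers $\ell,\ell'$, the input LSB $\ell$ and output LSB $\ell'$ of $h$ are said to respect the pseudo-injectivity condition (equivalently, $h$ is pseudo-injective with input LSB $\ell$ and output LSB $\ell'$) if for all $x_1,x_2\in[a;b]$ with $\lfloor x_1\rfloor_\ell\neq\lfloor x_2\rfloor_\ell$, we have $\lfloor h(x_1)\rfloor_{\ell'}\neq\lfloor h(x_2)\rfloor_{\ell'}$ or $h(x_1)=h(x_2)$. *)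

theory Defs
  imports Complex_Main
begin

definition round_lsb :: "int \<Rightarrow> real \<Rightarrow> real" where
  "round_lsb l x = (2 powr real_of_int l) * real_of_int \<lfloor>x / (2 powr real_of_int l)\<rfloor>"

definition pseudo_injective :: "real \<Rightarrow> real \<Rightarrow> (real \<Rightarrow> real) \<Rightarrow> int \<Rightarrow> int \<Rightarrow> bool" where
  "pseudo_injective a b h l l' \<longleftrightarrow>
     (\<forall>x1\<in>{a..b}. \<forall>x2\<in>{a..b}.
        round_lsb l x1 \<noteq> round_lsb l x2 \<longrightarrow>
        round_lsb l' (h x1) \<noteq> round_lsb l' (h x2) \<or> h x1 = h x2)"

end

theory Submission
  imports Defs
begin

lemma pseudo_injective_comp:
  assumes f_maps: "f ` {a..b} \<subseteq> {c..d}"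
    and f_pinj: "pseudo_injective a b f l l'"
    and g_pinj: "pseudo_injective c d g l' l''"
  shows "pseudo_injective a b (g \<circ> f) l l''"
  unfolding pseudo_injective_def
proof (intro ballI impI)
  fix x1 x2
  assume x1: "x1 \<in> {a..b}" and x2: "x2 \<in> {a..b}"
    and inputs_differ: "round_lsb l x1 \<noteq> round_lsb l x2"
  have y1: "f x1 \<in> {c..d}" and y2: "f x2 \<in> {c..d}"
    using f_maps x1 x2 by blast+
  from f_pinj x1 x2 inputs_differ
  consider "round_lsb l' (f x1) \<noteq> round_lsb l' (f x2)" | "f x1 = f x2"
    unfolding pseudo_injective_def by blast
  then show "round_lsb l'' ((g \<circ> f) x1) \<noteq> round_lsb l'' ((g \<circ> f) x2) \<or> (g \<circ> f) x1 = (g \<circ> f) x2"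
  proof cases
    case 1
    with g_pinj y1 y2 show ?thesis
      unfolding pseudo_injective_def by auto
  next
    case 2
    then show ?thesis by simp
  qed
qed

theorem mainTheorem1:
  fixes xl xh yl yh zl zh :: real and l l' l'' :: int and f g :: "real \<Rightarrow> real"
  assumes "xl \<le> xh" and "yl \<le> yh" and "zl \<le> zh"
    and "f ` {xl..xh} \<subseteq> {yl..yh}"
    and "g ` {yl..yh} \<subseteq> {zl..zh}"
    and "pseudo_injective xl xh f l l'"
    and "pseudo_injective yl yh g l' l''"
  shows "(g \<circ> f) ` {xl..xh} \<subseteq> {zl..zh} \<and> pseudo_injective xl xh (g \<circ> f) l l''"
proof
  show "(g \<circ> f) ` {xl..xh} \<subseteq> {zl..zh}"
    using assms(4,5) by (auto simp: image_comp[symmetric])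
  show "pseudo_injective xl xh (g \<circ> f) l l''"
    using assms(4,6,7) by (rule pseudo_injective_comp)
qed

end
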